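(* Let $k$ be a constant and let $D$ be the derivation (linear, satisfying the Leibniz rule, killing constants) on polynomials in the commuting variables $I,x,y,u$ determined by $D(I)=I(y+u)$, $D(x)=2kxy$, $D(y)=2kxy$, $D(u)=2kxy$. Then for $n\ge1$, $$D^n(I)=I\sum_{w\in B_n}x^{\mathrm{exc}(w)}y^{\mathrm{aexc}(w)}u^{\mathrm{fix}(w)}k^{n-\mathrm{cyc}(w)}.$$
   Context: $B_n$ is the hyperoctahedral group of signed permutations $w$ of $\pm[n]$ with $w(-i)=-w(i)$, written in standard cycle decomposition (each cycle starts with its element of largest absolute value, cycles ordered by increasing absolute value of first elements); $\mathrm{cyc}(w)$ is the number of cycles. For $i\in[n]$: $i$ is an excedance if $w(|w(i)|)>w(i)$; an anti-excedance if $w(i)=-i$ or $w(|w(i)|)<w(i)$; a fixed point if $w(i)=i$. $\mathrm{exc}(w)$, $\mathrm{aexc}(w)$, $\mathrm{fix}(w)$ denote their numbers. *)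

theory Defs
  imports Main "HOL-Library.Poly_Mapping"
begin

datatype var = VI | VX | VY | VU

(* Polynomials in I,x,y,u with coefficients in a commutative ring 'a (containing the constant k):
   finitely supported maps from monomials (exponent vectors) to coefficients. *)
type_synonym 'a mpoly4 = "(var \<Rightarrow>\<^sub>0 nat) \<Rightarrow>\<^sub>0 'a"

definition Var :: "var \<Rightarrow> 'a::comm_ring_1 mpoly4" where
  "Var v = Poly_Mapping.single (Poly_Mapping.single v 1) 1"

definition Const :: "'a::comm_ring_1 \<Rightarrow> 'a mpoly4" where
  "Const c = Poly_Mapping.single 0 c"

definition is_derivation :: "('a::comm_ring_1 mpoly4 \<Rightarrow> 'a mpoly4) \<Rightarrow> bool" where
  "is_derivation D \<longleftrightarrow>
     (\<forall>p q. D (p + q) = D p + D q) \<and>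
     (\<forall>p q. D (p * q) = D p * q + p * D q) \<and>
     (\<forall>c. D (Const c) = 0)"

definition signed_perms :: "nat \<Rightarrow> (int \<Rightarrow> int) set" where
  "signed_perms n = {w. bij_betw w ({- int n..int n} - {0}) ({- int n..int n} - {0})
                      \<and> (\<forall>i. w (- i) = - w i)
                      \<and> (\<forall>i. i \<notin> {- int n..int n} \<longrightarrow> w i = i)}"

definition exc :: "nat \<Rightarrow> (int \<Rightarrow> int) \<Rightarrow> nat" where
  "exc n w = card {i \<in> {1..int n}. w \<bar>w i\<bar> > w i}"

definition aexc :: "nat \<Rightarrow> (int \<Rightarrow> int) \<Rightarrow> nat" where
  "aexc n w = card {i \<in> {1..int n}. w i = - i \<or> w \<bar>w i\<bar> < w i}"

definition fixpts :: "nat \<Rightarrow> (int \<Rightarrow> int) \<Rightarrow> nat" where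
  "fixpts n w = card {i \<in> {1..int n}. w i = i}"

(* Cycles of the standard cycle decomposition: the cycles of i \<mapsto> |w(i)| on [n] *)
definition cyc :: "nat \<Rightarrow> (int \<Rightarrow> int) \<Rightarrow> nat" where
  "cyc n w = card ((\<lambda>i. {((\<lambda>j. \<bar>w j\<bar>) ^^ m) i | m. True}) ` {1..int n})"

end

theory Submission
  imports Defs "HOL-Combinatorics.Permutations"
begin

(* Write the summand of w as a product of one letter per position (u for a fixed point, x for an
   excedance, y for an anti-excedance) times k^(n - cyc w), and let P_n be the sum over B_n.
   Since D sends each of x, y, u to 2kxy, D(P_n) replaces one letter at a time by 2kxy.
   Combinatorially, every element of B_(n+1) arises exactly once from some w in B_n, a sign s and
   a position q in [n+1]: for q = n+1 the new letter is a fixed point or an anti-excedance and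
   forms a new cycle (factor u or y), otherwise n+1 is spliced into the cycle of q right after q,
   which keeps the number of cycles and replaces the letter of the predecessor p of q by the pair
   x y (factor k x y).  Summing over s doubles this, so P_(n+1) = (y + u) P_n + D(P_n), which is
   exactly D(I P_n) = I P_(n+1) because D(I) = I (y + u). *)

section \<open>Forward orbits\<close>

definition forward_orbit :: "('a \<Rightarrow> 'a) \<Rightarrow> 'a \<Rightarrow> 'a set" where
  "forward_orbit f x = {(f ^^ m) x | m. True}"

lemma forward_orbit_self: "x \<in> forward_orbit f x"
  unfolding forward_orbit_def by (rule CollectI, rule exI[of _ 0]) simp

lemma forward_orbit_closed: "y \<in> forward_orbit f x \<Longrightarrow> f y \<in> forward_orbit f x"
  unfolding forward_orbit_def by (auto intro: exI[of _ "Suc _"])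

lemma forward_orbit_least:
  assumes "x \<in> S" and "\<And>y. y \<in> forward_orbit f x \<Longrightarrow> y \<in> S \<Longrightarrow> f y \<in> S"
  shows "forward_orbit f x \<subseteq> S"
proof -
  have "(f ^^ m) x \<in> S" for m
  proof (induction m)
    case (Suc m)
    moreover have "(f ^^ m) x \<in> forward_orbit f x"
      unfolding forward_orbit_def by blast
    ultimately show ?case using assms(2) by simp
  qed (simp add: assms(1))
  then show ?thesis unfolding forward_orbit_def by blast
qed

lemma forward_orbit_step: "forward_orbit f x = insert x (forward_orbit f (f x))"
proof (rule equalityI)
  show "forward_orbit f x \<subseteq> insert x (forward_orbit f (f x))"
  proof (rule forward_orbit_least)
    fix y assume "y \<in> insert x (forward_orbit f (f x))"
    then show "f y \<in> insert x (forward_orbit f (f x))"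
      using forward_orbit_self[of "f x" f] forward_orbit_closed[of y f "f x"] by blast
  qed simp
  have "forward_orbit f (f x) \<subseteq> forward_orbit f x"
    by (rule forward_orbit_least) (simp_all add: forward_orbit_self forward_orbit_closed)
  then show "insert x (forward_orbit f (f x)) \<subseteq> forward_orbit f x"
    by (simp add: forward_orbit_self)
qed

lemma forward_orbit_subset: "f ` A \<subseteq> A \<Longrightarrow> x \<in> A \<Longrightarrow> forward_orbit f x \<subseteq> A"
  by (rule forward_orbit_least) auto

lemma forward_orbit_cong:
  assumes "f ` A \<subseteq> A" and "\<And>y. y \<in> A \<Longrightarrow> g y = f y" and "x \<in> A"
  shows "forward_orbit g x = forward_orbit f x"
proof (rule equalityI)
  have "forward_orbit f x \<subseteq> A"
    using assms(1,3) by (rule forward_orbit_subset)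
  then show "forward_orbit g x \<subseteq> forward_orbit f x"
    using assms(2) by (intro forward_orbit_least) (auto simp: forward_orbit_self forward_orbit_closed)
  show "forward_orbit f x \<subseteq> forward_orbit g x"
  proof (rule forward_orbit_least)
    fix y assume "y \<in> forward_orbit f x" and "y \<in> forward_orbit g x"
    then show "f y \<in> forward_orbit g x"
      using \<open>forward_orbit f x \<subseteq> A\<close> assms(2) forward_orbit_closed[of y g x] by auto
  qed (rule forward_orbit_self)
qed

lemma self_in_forward_orbit_image:
  assumes "finite A" and "inj_on f A" and "f ` A \<subseteq> A" and "x \<in> A"
  shows "x \<in> forward_orbit f (f x)"
proof -
  let ?O = "forward_orbit f (f x)"
  have "?O \<subseteq> A"
    using assms(3,4) by (intro forward_orbit_subset) auto
  then have "f ` ?O = ?O"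
    using assms(1,2) by (intro endo_inj_surj)
      (auto intro: finite_subset inj_on_subset simp: forward_orbit_closed)
  then obtain y where "y \<in> ?O" and "f y = f x"
    using forward_orbit_self[of "f x" f] by (metis imageE)
  with \<open>?O \<subseteq> A\<close> assms(2,4) show ?thesis
    by (metis inj_onD subsetD)
qed

lemma card_forward_orbits_insert_fixpoint:
  assumes "finite A" and "f ` A \<subseteq> A" and "N \<notin> A"
    and "g N = N" and "\<And>x. x \<in> A \<Longrightarrow> g x = f x"
  shows "card (forward_orbit g ` insert N A) = Suc (card (forward_orbit f ` A))"
proof -
  have "forward_orbit g N \<subseteq> {N}"
    using assms(4) by (intro forward_orbit_least) auto
  then have "forward_orbit g N = {N}"
    using forward_orbit_self[of N g] by auto
  moreover have "forward_orbit g ` A = forward_orbit f ` A"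
    using forward_orbit_cong[OF assms(2,5)] by auto
  moreover have "{N} \<notin> forward_orbit f ` A"
  proof
    assume "{N} \<in> forward_orbit f ` A"
    then obtain x where "x \<in> A" and "forward_orbit f x = {N}" by auto
    then show False
      using assms(3) forward_orbit_self[of x f] by auto
  qed
  ultimately show ?thesis
    using assms(1) by simp
qed

lemma forward_orbit_splice:
  assumes "f ` A \<subseteq> A" and "N \<notin> A" and "q \<in> A"
    and "g q = N" and "g N = f q" and "\<And>x. x \<in> A - {q} \<Longrightarrow> g x = f x" and "x \<in> A"
  shows "forward_orbit g x = forward_orbit f x \<union> (if q \<in> forward_orbit f x then {N} else {})"
proof (rule equalityI)
  have sub: "forward_orbit f x \<subseteq> A"
    using assms(1,7) by (rule forward_orbit_subset)
  show "forward_orbit g x \<subseteq> forward_orbit f x \<union> (if q \<in> forward_orbit f x then {N} else {})"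
  proof (rule forward_orbit_least)
    fix y assume y: "y \<in> forward_orbit f x \<union> (if q \<in> forward_orbit f x then {N} else {})"
    show "g y \<in> forward_orbit f x \<union> (if q \<in> forward_orbit f x then {N} else {})"
    proof (cases "y = q \<or> y = N")
      case True
      then show ?thesis
        using y assms(2,4,5) sub forward_orbit_closed[of q f x] by (auto split: if_splits)
    next
      case False
      then show ?thesis
        using y sub assms(6) forward_orbit_closed[of y f x] by (auto split: if_splits)
    qed
  qed (simp add: forward_orbit_self)
  have "forward_orbit f x \<subseteq> forward_orbit g x"
  proof (rule forward_orbit_least)
    fix y assume "y \<in> forward_orbit f x" and "y \<in> forward_orbit g x"
    then show "f y \<in> forward_orbit g x"
      using sub assms(4-6) forward_orbit_closed[of y g x] forward_orbit_closed[of N g x]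
      by (cases "y = q") auto
  qed (rule forward_orbit_self)
  moreover have "N \<in> forward_orbit g x" if "q \<in> forward_orbit f x"
    using that \<open>forward_orbit f x \<subseteq> forward_orbit g x\<close> assms(4) forward_orbit_closed[of q g x] by auto
  ultimately show "forward_orbit f x \<union> (if q \<in> forward_orbit f x then {N} else {}) \<subseteq> forward_orbit g x"
    by auto
qed

lemma card_forward_orbits_splice:
  assumes "finite A" and "inj_on f A" and "f ` A \<subseteq> A" and "N \<notin> A" and "q \<in> A"
    and "g q = N" and "g N = f q" and "\<And>x. x \<in> A - {q} \<Longrightarrow> g x = f x"
  shows "card (forward_orbit g ` insert N A) = card (forward_orbit f ` A)"
proof -
  define h where "h Z = (if q \<in> Z then insert N Z else Z)" for Z
  have splice: "forward_orbit g x = h (forward_orbit f x)" if "x \<in> A" for x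
    using forward_orbit_splice[OF assms(3-8) that] by (auto simp: h_def)
  have "f q \<in> A"
    using assms(3,5) by blast
  have "forward_orbit g N = forward_orbit g (f q)"
    using forward_orbit_step[of g N] splice[OF \<open>f q \<in> A\<close>]
      self_in_forward_orbit_image[OF assms(1-3,5)] by (simp add: assms(7) h_def)
  then have "forward_orbit g ` insert N A = h ` forward_orbit f ` A"
    using \<open>f q \<in> A\<close> splice by (auto simp: image_image)
  moreover have "inj_on h (forward_orbit f ` A)"
  proof (rule inj_onI)
    fix Z Z' assume "Z \<in> forward_orbit f ` A" "Z' \<in> forward_orbit f ` A" "h Z = h Z'"
    moreover have "N \<notin> Z" "N \<notin> Z'"
      using calculation(1,2) forward_orbit_subset[OF assms(3)] assms(4) by auto
    ultimately show "Z = Z'"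
      by (auto simp: h_def split: if_splits)
  qed
  ultimately show ?thesis
    by (simp add: card_image)
qed

section \<open>Signed permutations and insertion of a new letter\<close>

lemma signed_perms_iff:
  "w \<in> signed_perms n \<longleftrightarrow> w permutes {- int n..int n} \<and> (\<forall>i. w (- i) = - w i)"
proof
  assume w: "w \<in> signed_perms n"
  then have odd: "\<forall>i. w (- i) = - w i"
    unfolding signed_perms_def by blast
  then have "w 0 = 0"
    by (metis add.inverse_neutral equal_neg_zero)
  moreover have "bij_betw w ({- int n..int n} - {0}) ({- int n..int n} - {0})"
    using w unfolding signed_perms_def by blast
  moreover have "w i = i" if "i \<notin> {- int n..int n}" for i
    using w that unfolding signed_perms_def by blast
  ultimately have "w permutes {- int n..int n} - {0}"
    by (intro bij_imp_permutes) auto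
  then have "w permutes {- int n..int n}"
    by (rule permutes_subset) auto
  with odd show "w permutes {- int n..int n} \<and> (\<forall>i. w (- i) = - w i)"
    by simp
next
  assume w: "w permutes {- int n..int n} \<and> (\<forall>i. w (- i) = - w i)"
  then have "w 0 = 0"
    by (metis add.inverse_neutral equal_neg_zero)
  have "w permutes {- int n..int n} - {0}"
    by (rule permutes_superset[of w "{- int n..int n}"]) (use w \<open>w 0 = 0\<close> in auto)
  then show "w \<in> signed_perms n"
    using w permutes_not_in[of w "{- int n..int n}"]
    unfolding signed_perms_def by (simp add: permutes_imp_bij)
qed

lemma signed_perm_permutes: "w \<in> signed_perms n \<Longrightarrow> w permutes {- int n..int n}"
  by (simp add: signed_perms_iff)

lemma signed_perm_odd: "w \<in> signed_perms n \<Longrightarrow> w (- i) = - w i"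
  by (simp add: signed_perms_iff)

lemma signed_perm_fixes: "w \<in> signed_perms n \<Longrightarrow> int n < \<bar>i\<bar> \<Longrightarrow> w i = i"
  by (rule permutes_not_in[OF signed_perm_permutes]) auto

lemma signed_perm_abs_bij:
  assumes w: "w \<in> signed_perms n"
  shows "bij_betw (\<lambda>i. \<bar>w i\<bar>) {1..int n} {1..int n}"
proof -
  have inj: "inj w"
    using signed_perm_permutes[OF w] by (rule permutes_inj)
  have "w 0 = 0"
    using signed_perm_odd[OF w, of 0] by simp
  have "(\<lambda>i. \<bar>w i\<bar>) ` {1..int n} \<subseteq> {1..int n}"
  proof (rule image_subsetI)
    fix i :: int assume "i \<in> {1..int n}"
    have "w i \<in> {- int n..int n}"
      using \<open>i \<in> {1..int n}\<close> permutes_in_image[OF signed_perm_permutes[OF w]] by auto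
    moreover have "w i \<noteq> 0"
      using \<open>i \<in> {1..int n}\<close> inj \<open>w 0 = 0\<close> by (metis atLeastAtMost_iff injD not_one_le_zero)
    ultimately show "\<bar>w i\<bar> \<in> {1..int n}" by auto
  qed
  moreover have "inj_on (\<lambda>i. \<bar>w i\<bar>) {1..int n}"
  proof (rule inj_onI)
    fix i j assume "i \<in> {1..int n}" "j \<in> {1..int n}" "\<bar>w i\<bar> = \<bar>w j\<bar>"
    then have "w i = w j \<or> w i = w (- j)"
      by (simp add: abs_eq_iff signed_perm_odd[OF w])
    then have "i = j \<or> i = - j"
      using injD[OF inj] by blast
    with \<open>i \<in> {1..int n}\<close> \<open>j \<in> {1..int n}\<close> show "i = j"
      by auto
  qed
  ultimately show ?thesis
    unfolding bij_betw_def by (simp add: endo_inj_surj)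
qed

lemma signed_perm_abs_in: "w \<in> signed_perms n \<Longrightarrow> i \<in> {1..int n} \<Longrightarrow> \<bar>w i\<bar> \<in> {1..int n}"
  using bij_betw_apply[OF signed_perm_abs_bij] .

lemma signed_perms_0: "signed_perms 0 = {id}"
  by (auto simp: signed_perms_iff)

lemma signed_perms_comp: "v \<in> signed_perms n \<Longrightarrow> w \<in> signed_perms n \<Longrightarrow> v \<circ> w \<in> signed_perms n"
  by (simp add: signed_perms_iff permutes_compose)

lemma signed_perms_subset_Suc: "signed_perms n \<subseteq> signed_perms (Suc n)"
proof
  fix w assume w: "w \<in> signed_perms n"
  have "w permutes {- int (Suc n)..int (Suc n)}"
    by (rule permutes_subset[OF signed_perm_permutes[OF w]]) auto
  then show "w \<in> signed_perms (Suc n)"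
    by (simp add: signed_perms_iff signed_perm_odd[OF w])
qed

lemma signed_perms_Suc_fixed_last:
  assumes v: "v \<in> signed_perms (Suc n)" and last: "v (int n + 1) = int n + 1"
  shows "v \<in> signed_perms n"
proof -
  have "v (- int n - 1) = - int n - 1"
    using signed_perm_odd[OF v, of "int n + 1"] last by simp
  have "v permutes {- int n..int n}"
  proof (rule permutes_superset[OF signed_perm_permutes[OF v]])
    fix x assume "x \<in> {- int (Suc n)..int (Suc n)} - {- int n..int n}"
    then have "x = int n + 1 \<or> x = - int n - 1"
      by auto
    then show "v x = x"
      using last \<open>v (- int n - 1) = - int n - 1\<close> by auto
  qed
  then show ?thesis
    using v by (simp add: signed_perms_iff)
qed

definition signed_transpose :: "int \<Rightarrow> int \<Rightarrow> int \<Rightarrow> int" where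
  "signed_transpose a b = transpose a b \<circ> transpose (- a) (- b)"

lemma signed_transpose_involutory:
  "0 < a \<Longrightarrow> 0 < b \<Longrightarrow> signed_transpose a b (signed_transpose a b i) = i"
  by (auto simp: signed_transpose_def transpose_def)

lemma signed_transpose_in_signed_perms:
  assumes "a \<in> {1..int n}" and "b \<in> {1..int n}"
  shows "signed_transpose a b \<in> signed_perms n"
proof -
  have "signed_transpose a b permutes {- int n..int n}"
    unfolding signed_transpose_def using assms
    by (intro permutes_compose permutes_swap_id) auto
  moreover have "signed_transpose a b (- i) = - signed_transpose a b i" for i
    using assms by (auto simp: signed_transpose_def transpose_def)
  ultimately show ?thesis
    by (simp add: signed_perms_iff)
qed

definition flip_last :: "nat \<Rightarrow> int \<Rightarrow> int \<Rightarrow> int" where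
  "flip_last n s = (if s = 1 then id else transpose (int n + 1) (- int n - 1))"

lemma flip_last_involutory: "flip_last n s (flip_last n s i) = i"
  by (simp add: flip_last_def)

lemma flip_last_in_signed_perms: "flip_last n s \<in> signed_perms (Suc n)"
proof -
  have "flip_last n s permutes {- int (Suc n)..int (Suc n)}"
    unfolding flip_last_def by (auto intro: permutes_swap_id)
  moreover have "flip_last n s (- i) = - flip_last n s i" for i
    by (auto simp: flip_last_def transpose_def)
  ultimately show ?thesis
    by (simp add: signed_perms_iff)
qed

(* On absolute values, insert_last n w s q splices n+1 into the cycle of |w| right after q, with
   q now sent to s (n+1); for q = n+1 it adds n+1 as a fixed point (s = 1) or as the anti-excedance
   n+1 \<mapsto> -(n+1) (s = -1). *)
definition insert_last :: "nat \<Rightarrow> (int \<Rightarrow> int) \<Rightarrow> int \<Rightarrow> int \<Rightarrow> int \<Rightarrow> int" where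
  "insert_last n w s q = w \<circ> flip_last n s \<circ> signed_transpose q (int n + 1)"

lemma insert_last_in_signed_perms:
  assumes "w \<in> signed_perms n" and "q \<in> {1..int n + 1}"
  shows "insert_last n w s q \<in> signed_perms (Suc n)"
  unfolding insert_last_def using assms signed_perms_subset_Suc
  by (intro signed_perms_comp flip_last_in_signed_perms signed_transpose_in_signed_perms) auto

lemma insert_last_cancel:
  assumes "0 < q"
  shows "insert_last n w s q \<circ> signed_transpose q (int n + 1) \<circ> flip_last n s = w"
  using assms
  by (simp add: fun_eq_iff insert_last_def signed_transpose_involutory flip_last_involutory)

lemma insert_last_apply:
  assumes w: "w \<in> signed_perms n" and s: "s \<in> {1, -1}" and q: "q \<in> {1..int n}"
  shows "insert_last n w s q = w(q := s * (int n + 1), - q := - (s * (int n + 1)),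
    int n + 1 := w q, - int n - 1 := - w q)"
proof
  fix i
  have "w (int n + 1) = int n + 1" "w (- int n - 1) = - int n - 1"
    using signed_perm_fixes[OF w] by auto
  then show "insert_last n w s q i = (w(q := s * (int n + 1), - q := - (s * (int n + 1)),
    int n + 1 := w q, - int n - 1 := - w q)) i"
    using s q signed_perm_odd[OF w, of q]
    by (auto simp: insert_last_def flip_last_def signed_transpose_def transpose_def)
qed

lemma insert_last_apply_last:
  assumes w: "w \<in> signed_perms n" and s: "s \<in> {1, -1}"
  shows "insert_last n w s (int n + 1) = w(int n + 1 := s * (int n + 1), - int n - 1 := - (s * (int n + 1)))"
proof
  fix i
  have "w (int n + 1) = int n + 1" "w (- int n - 1) = - int n - 1"
    using signed_perm_fixes[OF w] by auto
  then show "insert_last n w s (int n + 1) i =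
    (w(int n + 1 := s * (int n + 1), - int n - 1 := - (s * (int n + 1)))) i"
    using s by (auto simp: insert_last_def flip_last_def signed_transpose_def transpose_def)
qed

lemma insert_last_at:
  assumes "w \<in> signed_perms n" and "s \<in> {1, -1}" and "q \<in> {1..int n + 1}"
  shows "insert_last n w s q q = s * (int n + 1)"
  using assms by (cases "q = int n + 1") (auto simp: insert_last_apply insert_last_apply_last)

lemma abs_insert_last_less:
  assumes w: "w \<in> signed_perms n" and "s \<in> {1, -1}" and "q \<in> {1..int n + 1}"
    and "i \<in> {1..int n + 1}" and "i \<noteq> q"
  shows "\<bar>insert_last n w s q i\<bar> < int n + 1"
proof (cases "q = int n + 1")
  case True
  then show ?thesis
    using assms signed_perm_abs_in[OF w, of i] by (auto simp: insert_last_apply_last)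
next
  case False
  then show ?thesis
    using assms signed_perm_abs_in[OF w, of i] signed_perm_abs_in[OF w, of q]
    by (auto simp: insert_last_apply)
qed

lemma inj_on_insert_last:
  "inj_on (\<lambda>(w, s, q). insert_last n w s q) (signed_perms n \<times> {1, -1} \<times> {1..int n + 1})"
proof (rule inj_onI)
  fix x x'
  assume "x \<in> signed_perms n \<times> {1, -1} \<times> {1..int n + 1}"
    and "x' \<in> signed_perms n \<times> {1, -1} \<times> {1..int n + 1}"
    and eq: "(\<lambda>(w, s, q). insert_last n w s q) x = (\<lambda>(w, s, q). insert_last n w s q) x'"
  then obtain w s q w' s' q' where x: "x = (w, s, q)" and x': "x' = (w', s', q')"
    and w: "w \<in> signed_perms n" and s: "s \<in> {1, -1}" and q: "q \<in> {1..int n + 1}"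
    and w': "w' \<in> signed_perms n" and s': "s' \<in> {1, -1}" and q': "q' \<in> {1..int n + 1}"
    by auto
  have v: "insert_last n w s q = insert_last n w' s' q'"
    using eq by (simp add: x x')
  have "q = q'"
  proof (rule ccontr)
    assume "q \<noteq> q'"
    then have "\<bar>insert_last n w' s' q' q\<bar> < int n + 1"
      by (rule abs_insert_last_less[OF w' s' q' q])
    then show False
      using insert_last_at[OF w s q] s by (auto simp: v)
  qed
  moreover have "s = s'"
    using insert_last_at[OF w s q] insert_last_at[OF w' s' q'] v \<open>q = q'\<close> by auto
  moreover have "w = w'"
  proof -
    have "w = insert_last n w s q \<circ> signed_transpose q (int n + 1) \<circ> flip_last n s"
      using q by (simp add: insert_last_cancel)
    also have "\<dots> = insert_last n w' s' q' \<circ> signed_transpose q' (int n + 1) \<circ> flip_last n s'"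
      using v by (simp add: \<open>q = q'\<close> \<open>s = s'\<close>)
    also have "\<dots> = w'"
      using q' by (simp add: insert_last_cancel)
    finally show ?thesis .
  qed
  ultimately show "x = x'"
    by (simp add: x x')
qed

lemma signed_perm_Suc_insert_lastE:
  assumes v: "v \<in> signed_perms (Suc n)"
  obtains w s q where "w \<in> signed_perms n" and "s \<in> {1, -1}" and "q \<in> {1..int n + 1}"
    and "v = insert_last n w s q"
proof -
  obtain c where c: "v c = int n + 1"
    using permutes_surj[OF signed_perm_permutes[OF v]] by (metis surjD)
  have "c \<noteq> 0"
    using c signed_perm_odd[OF v, of 0] by auto
  have "\<bar>c\<bar> \<le> int n + 1"
    using c signed_perm_fixes[OF v, of c] by (cases "\<bar>c\<bar> \<le> int n + 1") auto
  define q where "q = \<bar>c\<bar>"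
  define s where "s = sgn c"
  have q: "q \<in> {1..int n + 1}" and s: "s \<in> {1, -1}"
    using \<open>c \<noteq> 0\<close> \<open>\<bar>c\<bar> \<le> int n + 1\<close> by (auto simp: q_def s_def sgn_if)
  have vq: "v q = s * (int n + 1)"
    using c signed_perm_odd[OF v, of c] by (auto simp: q_def s_def sgn_if)
  define w where "w = v \<circ> signed_transpose q (int n + 1) \<circ> flip_last n s"
  have "w \<in> signed_perms (Suc n)"
    unfolding w_def using v q
    by (intro signed_perms_comp flip_last_in_signed_perms signed_transpose_in_signed_perms) auto
  moreover have "w (int n + 1) = int n + 1"
    using s q vq signed_perm_odd[OF v, of q]
    by (auto simp: w_def flip_last_def signed_transpose_def transpose_def)
  ultimately have "w \<in> signed_perms n"
    by (rule signed_perms_Suc_fixed_last)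
  moreover have "v = insert_last n w s q"
    using q by (simp add: fun_eq_iff w_def insert_last_def
        signed_transpose_involutory flip_last_involutory)
  ultimately show ?thesis
    by (rule that[OF _ s q])
qed

lemma bij_betw_insert_last:
  "bij_betw (\<lambda>(w, s, q). insert_last n w s q)
    (signed_perms n \<times> {1, -1} \<times> {1..int n + 1}) (signed_perms (Suc n))"
proof (rule bij_betw_imageI[OF inj_on_insert_last])
  show "(\<lambda>(w, s, q). insert_last n w s q) ` (signed_perms n \<times> {1, -1} \<times> {1..int n + 1})
    = signed_perms (Suc n)"
  proof
    show "(\<lambda>(w, s, q). insert_last n w s q) ` (signed_perms n \<times> {1, -1} \<times> {1..int n + 1})
      \<subseteq> signed_perms (Suc n)"
      using insert_last_in_signed_perms by auto
    show "signed_perms (Suc n)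
      \<subseteq> (\<lambda>(w, s, q). insert_last n w s q) ` (signed_perms n \<times> {1, -1} \<times> {1..int n + 1})"
    proof
      fix v assume "v \<in> signed_perms (Suc n)"
      then obtain w s q where "w \<in> signed_perms n" "s \<in> {1, -1}" "q \<in> {1..int n + 1}"
        and "v = insert_last n w s q"
        by (rule signed_perm_Suc_insert_lastE)
      then show "v \<in> (\<lambda>(w, s, q). insert_last n w s q) ` (signed_perms n \<times> {1, -1} \<times> {1..int n + 1})"
        unfolding image_iff by (intro bexI[of _ "(w, s, q)"]) auto
    qed
  qed
qed

lemma sum_signed_perms_Suc:
  "(\<Sum>v\<in>signed_perms (Suc n). g v)
    = (\<Sum>w\<in>signed_perms n. \<Sum>s\<in>{1, -1}. \<Sum>q\<in>{1..int n + 1}. g (insert_last n w s q))"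
proof -
  have "(\<Sum>v\<in>signed_perms (Suc n). g v) = (\<Sum>x\<in>signed_perms n \<times> {1, -1} \<times> {1..int n + 1}.
      g ((\<lambda>(w, s, q). insert_last n w s q) x))"
    by (rule sum.reindex_bij_betw[OF bij_betw_insert_last, symmetric])
  then show ?thesis
    by (simp add: sum.cartesian_product')
qed

section \<open>Cycle counts and weights\<close>

lemma cyc_eq_card_forward_orbits: "cyc n w = card (forward_orbit (\<lambda>j. \<bar>w j\<bar>) ` {1..int n})"
  unfolding cyc_def forward_orbit_def ..

lemma cyc_le: "cyc n w \<le> n"
  unfolding cyc_eq_card_forward_orbits using card_image_le[of "{1..int n}"] by simp

lemma atLeastAtMost_Suc_int: "{1..int (Suc n)} = insert (int n + 1) {1..int n}"
  by auto

lemma cyc_insert_last_last: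
  assumes w: "w \<in> signed_perms n" and s: "s \<in> {1, -1}"
  shows "cyc (Suc n) (insert_last n w s (int n + 1)) = Suc (cyc n w)"
  unfolding cyc_eq_card_forward_orbits atLeastAtMost_Suc_int
proof (rule card_forward_orbits_insert_fixpoint)
  show "(\<lambda>j. \<bar>w j\<bar>) ` {1..int n} \<subseteq> {1..int n}"
    using signed_perm_abs_in[OF w] by blast
qed (use s in \<open>auto simp: insert_last_apply_last[OF w s]\<close>)

lemma cyc_insert_last:
  assumes w: "w \<in> signed_perms n" and s: "s \<in> {1, -1}" and q: "q \<in> {1..int n}"
  shows "cyc (Suc n) (insert_last n w s q) = cyc n w"
  unfolding cyc_eq_card_forward_orbits atLeastAtMost_Suc_int
proof (rule card_forward_orbits_splice)
  show "inj_on (\<lambda>j. \<bar>w j\<bar>) {1..int n}"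
    using signed_perm_abs_bij[OF w] by (rule bij_betw_imp_inj_on)
  show "(\<lambda>j. \<bar>w j\<bar>) ` {1..int n} \<subseteq> {1..int n}"
    using signed_perm_abs_in[OF w] by blast
qed (use s q in \<open>auto simp: insert_last_apply[OF w s q]\<close>)

context
  fixes X Y U K :: "'a::comm_ring_1"
begin

definition letter_wt :: "(int \<Rightarrow> int) \<Rightarrow> int \<Rightarrow> 'a" where
  "letter_wt w i = (if w i = i then U else if w \<bar>w i\<bar> > w i then X else Y)"

definition perm_wt :: "nat \<Rightarrow> (int \<Rightarrow> int) \<Rightarrow> 'a" where
  "perm_wt n w = (\<Prod>i\<in>{1..int n}. letter_wt w i) * K ^ (n - cyc n w)"

definition perm_wt_without :: "nat \<Rightarrow> (int \<Rightarrow> int) \<Rightarrow> int \<Rightarrow> 'a" where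
  "perm_wt_without n w p = (\<Prod>i\<in>{1..int n} - {p}. letter_wt w i) * K ^ (n - cyc n w)"

lemma letter_wt_cong: "v i = w i \<Longrightarrow> v \<bar>w i\<bar> = w \<bar>w i\<bar> \<Longrightarrow> letter_wt v i = letter_wt w i"
  by (simp add: letter_wt_def)

lemma perm_wt_monomial:
  assumes w: "w \<in> signed_perms n"
  shows "X ^ exc n w * Y ^ aexc n w * U ^ fixpts n w * K ^ (n - cyc n w) = perm_wt n w"
proof -
  let ?fix = "{i. w i = i}" and ?exc = "{i. w \<bar>w i\<bar> > w i}"
  have exc: "{1..int n} \<inter> - ?fix \<inter> ?exc = {i \<in> {1..int n}. w \<bar>w i\<bar> > w i}"
    by auto
  have aexc: "{1..int n} \<inter> - ?fix \<inter> - ?exc = {i \<in> {1..int n}. w i = - i \<or> w \<bar>w i\<bar> < w i}"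
  proof -
    have "(w i \<noteq> i \<and> \<not> w i < w \<bar>w i\<bar>) \<longleftrightarrow> (w i = - i \<or> w \<bar>w i\<bar> < w i)" if "i \<in> {1..int n}" for i
    proof -
      have "w \<bar>w i\<bar> = w i \<longleftrightarrow> \<bar>w i\<bar> = i"
        using permutes_inj[OF signed_perm_permutes[OF w]] by (metis injD)
      then show ?thesis
        using that by (cases "0 \<le> w i") auto
    qed
    then show ?thesis
      by blast
  qed
  have "(\<Prod>i\<in>{1..int n}. letter_wt w i)
      = U ^ card ({1..int n} \<inter> ?fix) * (X ^ card ({1..int n} \<inter> - ?fix \<inter> ?exc)
          * Y ^ card ({1..int n} \<inter> - ?fix \<inter> - ?exc))"
    unfolding letter_wt_def by (simp add: prod.If_cases Int_assoc)
  also have "\<dots> = X ^ exc n w * Y ^ aexc n w * U ^ fixpts n w"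
    unfolding exc_def aexc_def fixpts_def exc[symmetric] aexc[symmetric]
    by (simp add: Int_def mult_ac)
  finally show ?thesis
    by (simp add: perm_wt_def)
qed

lemma perm_wt_insert_last_last:
  assumes w: "w \<in> signed_perms n" and s: "s \<in> {1, -1}"
  shows "perm_wt (Suc n) (insert_last n w s (int n + 1)) = (if s = 1 then U else Y) * perm_wt n w"
proof -
  let ?v = "insert_last n w s (int n + 1)"
  have "letter_wt ?v i = letter_wt w i" if "i \<in> {1..int n}" for i
    using that signed_perm_abs_in[OF w that]
    by (intro letter_wt_cong) (auto simp: insert_last_apply_last[OF w s])
  then have "(\<Prod>i\<in>{1..int n}. letter_wt ?v i) = (\<Prod>i\<in>{1..int n}. letter_wt w i)"
    by simp
  moreover have "letter_wt ?v (int n + 1) = (if s = 1 then U else Y)"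
    using s by (auto simp: letter_wt_def insert_last_apply_last[OF w s])
  ultimately show ?thesis
    unfolding perm_wt_def atLeastAtMost_Suc_int cyc_insert_last_last[OF w s] by simp
qed

context
  fixes n :: nat and w :: "int \<Rightarrow> int" and s p :: int
  assumes w: "w \<in> signed_perms n" and s: "s \<in> {1, -1}" and p: "p \<in> {1..int n}"
begin

lemma letter_wt_insert_last_other:
  assumes "i \<in> {1..int n}" and "i \<noteq> p" and "i \<noteq> \<bar>w p\<bar>"
  shows "letter_wt (insert_last n w s \<bar>w p\<bar>) i = letter_wt w i"
proof (rule letter_wt_cong)
  have "\<bar>w i\<bar> \<noteq> \<bar>w p\<bar>"
    using assms(1,2) p inj_onD[OF bij_betw_imp_inj_on[OF signed_perm_abs_bij[OF w]]] by blast
  then show "insert_last n w s \<bar>w p\<bar> i = w i" "insert_last n w s \<bar>w p\<bar> \<bar>w i\<bar> = w \<bar>w i\<bar>"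
    using assms signed_perm_abs_in[OF w assms(1)]
    by (auto simp: insert_last_apply[OF w s signed_perm_abs_in[OF w p]])
qed

lemma letter_wt_insert_last_abs_fixpoint:
  assumes "\<bar>w p\<bar> = p"
  shows "letter_wt (insert_last n w s \<bar>w p\<bar>) p * letter_wt (insert_last n w s \<bar>w p\<bar>) (int n + 1) = X * Y"
proof -
  define N where "N = int n + 1"
  let ?v = "insert_last n w s p"
  have v: "?v p = s * N" "?v N = w p"
    using p by (auto simp: insert_last_apply[OF w s p] N_def)
  have "- N < w p" "w p < N" "p < N"
    using assms p by (auto simp: N_def)
  with s v assms show ?thesis
    unfolding N_def[symmetric] by (auto simp: letter_wt_def mult.commute)
qed

lemma letter_wt_insert_last_abs_non_fixpoint:
  assumes "\<bar>w p\<bar> \<noteq> p"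
  shows "letter_wt (insert_last n w s \<bar>w p\<bar>) (int n + 1) = letter_wt w \<bar>w p\<bar>"
    and "letter_wt (insert_last n w s \<bar>w p\<bar>) \<bar>w p\<bar> * letter_wt (insert_last n w s \<bar>w p\<bar>) p = X * Y"
proof -
  let ?q = "\<bar>w p\<bar>" and ?N = "int n + 1"
  let ?v = "insert_last n w s ?q"
  have q: "?q \<in> {1..int n}"
    using signed_perm_abs_in[OF w p] .
  have wq: "\<bar>w ?q\<bar> \<in> {1..int n}"
    using signed_perm_abs_in[OF w q] .
  have "\<bar>w ?q\<bar> \<noteq> ?q"
    using assms q p inj_onD[OF bij_betw_imp_inj_on[OF signed_perm_abs_bij[OF w]], of ?q p] by auto
  then have "w ?q \<noteq> ?q"
    by auto
  have v: "?v ?N = w ?q" "?v \<bar>w ?q\<bar> = w \<bar>w ?q\<bar>" "?v ?q = s * ?N" "?v p = w p"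
    using q wq p assms \<open>\<bar>w ?q\<bar> \<noteq> ?q\<close> by (auto simp: insert_last_apply[OF w s q])
  moreover have "w ?q \<noteq> ?N"
    using wq by auto
  ultimately show "letter_wt ?v ?N = letter_wt w ?q"
    using \<open>w ?q \<noteq> ?q\<close> by (simp add: letter_wt_def)
  have "\<bar>s * ?N\<bar> = ?N" "w p \<noteq> p"
    using s assms p by auto
  then show "letter_wt ?v ?q * letter_wt ?v p = X * Y"
    using v s q wq by (auto simp: letter_wt_def mult.commute)
qed

lemma prod_letter_wt_insert_last:
  "(\<Prod>i\<in>{1..int (Suc n)}. letter_wt (insert_last n w s \<bar>w p\<bar>) i)
    = X * Y * (\<Prod>i\<in>{1..int n} - {p}. letter_wt w i)"
proof -
  let ?q = "\<bar>w p\<bar>" and ?A = "{1..int n} - {p}"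
  let ?L = "letter_wt (insert_last n w s ?q)"
  have "(\<Prod>i\<in>{1..int (Suc n)}. ?L i) = ?L p * ?L (int n + 1) * (\<Prod>i\<in>?A. ?L i)"
    unfolding atLeastAtMost_Suc_int by (simp add: prod.remove[OF _ p] mult_ac)
  also have "\<dots> = X * Y * (\<Prod>i\<in>?A. letter_wt w i)"
  proof (cases "?q = p")
    case True
    have "(\<Prod>i\<in>?A. ?L i) = (\<Prod>i\<in>?A. letter_wt w i)"
      by (intro prod.cong refl letter_wt_insert_last_other) (use True in auto)
    then show ?thesis
      using letter_wt_insert_last_abs_fixpoint[OF True] by simp
  next
    case False
    then have q: "?q \<in> ?A"
      using signed_perm_abs_in[OF w p] by simp
    have "(\<Prod>i\<in>?A - {?q}. ?L i) = (\<Prod>i\<in>?A - {?q}. letter_wt w i)"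
      by (intro prod.cong) (auto intro: letter_wt_insert_last_other)
    then have "?L p * ?L (int n + 1) * (\<Prod>i\<in>?A. ?L i)
        = (?L ?q * ?L p) * (letter_wt w ?q * (\<Prod>i\<in>?A - {?q}. letter_wt w i))"
      using letter_wt_insert_last_abs_non_fixpoint(1)[OF False] by (simp add: prod.remove[OF _ q] mult_ac)
    also have "\<dots> = X * Y * (\<Prod>i\<in>?A. letter_wt w i)"
      using letter_wt_insert_last_abs_non_fixpoint(2)[OF False] by (simp add: prod.remove[OF _ q])
    finally show ?thesis .
  qed
  finally show ?thesis .
qed

lemma perm_wt_insert_last:
  "perm_wt (Suc n) (insert_last n w s \<bar>w p\<bar>) = X * Y * K * perm_wt_without n w p"
proof -
  have "Suc n - cyc (Suc n) (insert_last n w s \<bar>w p\<bar>) = Suc (n - cyc n w)"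
    using cyc_insert_last[OF w s signed_perm_abs_in[OF w p]] cyc_le[of n w] by simp
  then show ?thesis
    unfolding perm_wt_def perm_wt_without_def prod_letter_wt_insert_last by (simp add: mult_ac)
qed

end

lemma sum_perm_wt_insert_last:
  assumes w: "w \<in> signed_perms n"
  shows "(\<Sum>s\<in>{1, -1}. \<Sum>q\<in>{1..int n + 1}. perm_wt (Suc n) (insert_last n w s q))
    = (Y + U) * perm_wt n w + (\<Sum>p\<in>{1..int n}. 2 * K * X * Y * perm_wt_without n w p)"
proof -
  let ?S = "\<Sum>p\<in>{1..int n}. X * Y * K * perm_wt_without n w p"
  have "(\<Sum>q\<in>{1..int n + 1}. perm_wt (Suc n) (insert_last n w s q))
      = (if s = 1 then U else Y) * perm_wt n w + ?S" if s: "s \<in> {1, -1}" for s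
  proof -
    have "(\<Sum>q\<in>{1..int n}. perm_wt (Suc n) (insert_last n w s q))
        = (\<Sum>p\<in>{1..int n}. perm_wt (Suc n) (insert_last n w s \<bar>w p\<bar>))"
      by (rule sum.reindex_bij_betw[OF signed_perm_abs_bij[OF w], symmetric])
    also have "\<dots> = ?S"
      using perm_wt_insert_last[OF w s] by simp
    finally have "(\<Sum>q\<in>{1..int n}. perm_wt (Suc n) (insert_last n w s q)) = ?S" .
    moreover have "{1..int n + 1} = insert (int n + 1) {1..int n}"
      by auto
    ultimately show ?thesis
      by (simp add: perm_wt_insert_last_last[OF w s])
  qed
  then have "(\<Sum>s\<in>{1, -1}. \<Sum>q\<in>{1..int n + 1}. perm_wt (Suc n) (insert_last n w s q))
      = (U * perm_wt n w + ?S) + (Y * perm_wt n w + ?S)"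
    by simp
  moreover have "(\<Sum>p\<in>{1..int n}. 2 * K * X * Y * perm_wt_without n w p) = 2 * ?S"
    by (simp add: sum_distrib_left mult_ac)
  ultimately show ?thesis
    by (simp add: algebra_simps)
qed

lemma sum_perm_wt_Suc:
  "(\<Sum>v\<in>signed_perms (Suc n). perm_wt (Suc n) v)
    = (Y + U) * (\<Sum>w\<in>signed_perms n. perm_wt n w)
      + (\<Sum>w\<in>signed_perms n. \<Sum>p\<in>{1..int n}. 2 * K * X * Y * perm_wt_without n w p)"
proof -
  have "(\<Sum>v\<in>signed_perms (Suc n). perm_wt (Suc n) v) = (\<Sum>w\<in>signed_perms n.
      (Y + U) * perm_wt n w + (\<Sum>p\<in>{1..int n}. 2 * K * X * Y * perm_wt_without n w p))"
    unfolding sum_signed_perms_Suc by (rule sum.cong[OF refl]) (rule sum_perm_wt_insert_last)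
  then show ?thesis
    by (simp add: sum.distrib sum_distrib_left)
qed

end

section \<open>Derivations\<close>

locale derivation =
  fixes D :: "'a::comm_ring_1 \<Rightarrow> 'a"
  assumes add: "D (a + b) = D a + D b"
    and leibniz: "D (a * b) = D a * b + a * D b"
begin

lemma D_zero: "D 0 = 0"
  using add[of 0 0] by simp

lemma D_one: "D 1 = 0"
  using leibniz[of 1 1] by simp

lemma D_sum: "D (\<Sum>x\<in>A. f x) = (\<Sum>x\<in>A. D (f x))"
  by (induction A rule: infinite_finite_induct) (simp_all add: D_zero add)

lemma D_prod:
  assumes "finite A"
  shows "D (\<Prod>x\<in>A. f x) = (\<Sum>x\<in>A. D (f x) * (\<Prod>y\<in>A - {x}. f y))"
  using assms
proof (induction A rule: finite_induct)
  case (insert a A)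
  have "(\<Sum>x\<in>A. D (f x) * (\<Prod>y\<in>insert a A - {x}. f y)) = f a * (\<Sum>x\<in>A. D (f x) * (\<Prod>y\<in>A - {x}. f y))"
    unfolding sum_distrib_left
  proof (rule sum.cong[OF refl])
    fix x assume "x \<in> A"
    then have "insert a A - {x} = insert a (A - {x})"
      using insert.hyps by auto
    then show "D (f x) * (\<Prod>y\<in>insert a A - {x}. f y) = f a * (D (f x) * (\<Prod>y\<in>A - {x}. f y))"
      using insert.hyps by (simp add: mult_ac)
  qed
  moreover have "insert a A - {a} = A"
    using insert.hyps by auto
  ultimately show ?case
    using insert by (simp add: leibniz)
qed (simp add: D_one)

lemma D_power: "D c = 0 \<Longrightarrow> D (c ^ k) = 0"
  by (induction k) (simp_all add: D_one leibniz)

lemma D_perm_wt: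
  assumes "D K = 0" and "D X = c" and "D Y = c" and "D U = c"
  shows "D (perm_wt X Y U K n w) = (\<Sum>p\<in>{1..int n}. c * perm_wt_without X Y U K n w p)"
proof -
  have "D (letter_wt X Y U w i) = c" for i
    by (simp add: letter_wt_def assms(2-4))
  then show ?thesis
    by (simp add: perm_wt_def perm_wt_without_def leibniz D_power[OF assms(1)] D_prod
        sum_distrib_right mult.assoc)
qed

lemma funpow_D_eq_perm_wt_sum:
  assumes "D I = I * (Y + U)" and "D K = 0"
    and "D X = 2 * K * X * Y" and "D Y = 2 * K * X * Y" and "D U = 2 * K * X * Y"
  shows "(D ^^ m) I = I * (\<Sum>w\<in>signed_perms m. perm_wt X Y U K m w)"
proof (induction m)
  case 0
  show ?case
    by (simp add: signed_perms_0 perm_wt_def)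
next
  case (Suc m)
  let ?P = "\<lambda>m. \<Sum>w\<in>signed_perms m. perm_wt X Y U K m w"
  have "(D ^^ Suc m) I = D I * ?P m + I * D (?P m)"
    by (simp add: Suc.IH leibniz)
  also have "\<dots> = I * ((Y + U) * ?P m
      + (\<Sum>w\<in>signed_perms m. \<Sum>p\<in>{1..int m}. 2 * K * X * Y * perm_wt_without X Y U K m w p))"
    by (simp add: assms(1) D_sum D_perm_wt[OF assms(2-5)] algebra_simps)
  also have "\<dots> = I * ?P (Suc m)"
    by (simp add: sum_perm_wt_Suc)
  finally show ?case .
qed

end

theorem lemma11:
  fixes D :: "'a::comm_ring_1 mpoly4 \<Rightarrow> 'a mpoly4" and k :: 'a and n :: nat
  assumes "is_derivation D"
    and "D (Var VI) = Var VI * (Var VY + Var VU)"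
    and "D (Var VX) = 2 * Const k * Var VX * Var VY"
    and "D (Var VY) = 2 * Const k * Var VX * Var VY"
    and "D (Var VU) = 2 * Const k * Var VX * Var VY"
    and "n \<ge> 1"
  shows "(D ^^ n) (Var VI) = Var VI *
    (\<Sum>w\<in>signed_perms n. Var VX ^ exc n w * Var VY ^ aexc n w * Var VU ^ fixpts n w
                           * Const k ^ (n - cyc n w))"
proof -
  interpret derivation D
    using assms(1) unfolding is_derivation_def by unfold_locales blast+
  have "(D ^^ n) (Var VI) = Var VI * (\<Sum>w\<in>signed_perms n. perm_wt (Var VX) (Var VY) (Var VU) (Const k) n w)"
    using assms(1-5) by (intro funpow_D_eq_perm_wt_sum) (simp_all add: is_derivation_def)
  also have "\<dots> = Var VI * (\<Sum>w\<in>signed_perms n. Var VX ^ exc n w * Var VY ^ aexc n w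
      * Var VU ^ fixpts n w * Const k ^ (n - cyc n w))"
    by (rule arg_cong[where f = "times (Var VI)"], rule sum.cong[OF refl], rule perm_wt_monomial[symmetric])
  finally show ?thesis .
qed

end
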